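(* Not every (nondeterministic) abstract transducer can be transformed into an equivalent deterministic one: there exists an abstract transducer $T$ such that no deterministic abstract transducer $T_d$ (with the same abstract input and output domains) satisfies $T\equiv T_d$.
   Context: Abstract word domain over an alphabet $A$: a set $W$ of abstract words forming a complete lattice $(W,\sqsubseteq,\sqcap,\sqcup,\top,\bot)$, a denotation $[\![\cdot]\!]:W\to 2^{A^\infty}$ with $A^\infty=A^*\cup A^\omega$, and an abstraction $\alpha:2^{A^\infty}\to W$ with $[\![\alpha(S)]\!]=S$. It contains an abstract epsilon word $w_\epsilon$ with $[\![w_\epsilon]\!]=\{\epsilon\}$, and $[\![\bot]\!]=\emptyset$. Operations: concatenation $[\![u\cdot v]\!]=\{x\cdot y\mid x\in[\![u]\!],y\in[\![v]\!]\}$ (an infinite word $x$ concatenated with anything is $x$); left quotient $u^{v}=\alpha(\{s\mid p\cdot s\in[\![u]\!],\,p\in[\![v]\!]\})$; $\mathrm{head}(u)=\alpha(\{h\mid |h|=1,\ h\cdot x\in[\![u]\!]\})$; $\mathrm{tail}(u)=\alpha(\{x\mid h\cdot x\in[\![u]\!],\ |h|=1\})$. An abstract transducer is $T=(Q,D_I,D_O,\iota_0,F,\delta)$ where: $Q$ is a finite set of control states, implicitly containing a trap state $q_{trap}$ with transition $(q_{trap},\top,q_{trap},w_\epsilon)$ and a bottom state $q_\bot\notin F$ with no leaving transitions; $D_I$ is an abstract word domain (abstract words $W_I$) over a concrete input alphabet $\Sigma$ with denotations in $2^{\Sigma^*}$ and whose lattice is distributive and complemented; $D_O$ is an abstract word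 domain (abstract words $W_O$) over an output alphabet $\Theta$; $\iota_0$ is a non-empty finite partial map $Q\to W_O$ (the initial transducer state); $F\subseteq Q$ are accepting states; $\delta\subseteq Q\times W_I\times Q\times W_O$ is the transition relation, where no transition has input word $\bot$. A transducer state is a finite partial map $Q\to W_O$ (a set of pairs with distinct first components). For a set $M\subseteq Q\times W_O$ its image join is $\bigsqcup_\to M=\{(q,\bigsqcup\{\theta\mid(q,\theta)\in M\})\mid (q,\cdot)\in M\}$. An $\epsilon$-move is a transition whose input word $w$ has $[\![w]\!]=\{\epsilon\}$. The $\epsilon$-closure $E(q)$ is the set of states reachable from $q$ (including $q$) using only $\epsilon$-moves, plus $q_\bot$ if $E(q)$ contains an $\epsilon$-loop from which no state without leaving $\epsilon$-moves is reachable. Closure termination states: $CT(q)=\{q'\in E(q)\mid$ no $\epsilon$-move leaves $q'\}\cup(E(q)\cap F)$. Concrete language on termination $\Lambda(q,q_t)$: for $q_t\neq q_\bot$ the union, over all finite paths of $\epsilon$-moves from $q$ to $q_t$, of the concatenation of the denotations of the output words along the path ($\{\epsilon\}$ for the empty path); for $q_t=q_\bot$ the union over all infinite $\epsilon$-move paths from $q$ of the concatenations of their output denotations. Output closure: $\mathrm{Cl}(q,\theta_0)=\{(q_t,\alpha([\![\theta_0]\!]\cdot\Lambda(q,q_t)))\mid q_t\in CT(q)\}$. Run: $\mathrm{run}(q,\theta,w,w_\ell)=\{(q,\theta)\}$ if $w=w_\epsilon$, and otherwise $\bigsqcup_\to\bigcup\{\mathrm{run}(q'',\theta\cdot\theta'',\mathrm{tail}(w),w_\ell)\mid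 (q,w_\tau,q',\theta')\in\delta,\ (q'',\theta'')\in\mathrm{Cl}(q',\theta'),\ (w\cdot w_\ell)^{w_\tau}\neq\bot,\ \mathrm{head}(w)^{\mathrm{head}(w_\tau)}\neq\bot\}$. For a transducer state $\iota$, $\widehat{\mathrm{run}}(\iota,w,w_\ell)=\bigsqcup_\to\bigcup_{(q,\theta)\in\iota}\mathrm{run}(q,\theta,w,w_\ell)$, and for $\bar\sigma\in\Sigma^*$, $\hat\sigma\subseteq\Sigma^*$: $\widehat{\mathrm{run}}_T(\bar\sigma,\hat\sigma)=\widehat{\mathrm{run}}(\iota_0,\alpha_I(\{\bar\sigma\}),\alpha_I(\hat\sigma))$. $T$ is deterministic iff $|\iota_0|\le 1$ and every transducer state reached along any run has at most one element, i.e. $|\widehat{\mathrm{run}}_T(\bar\sigma,\hat\sigma)|\le 1$ for all $\bar\sigma\in\Sigma^*$, $\hat\sigma\subseteq\Sigma^*$. Intermediate input language $L_{in}(T)$: pairs $(\bar\sigma,\hat\sigma)$ such that $\widehat{\mathrm{run}}_T(\bar\sigma,\hat\sigma)$ contains a pair $(q,\theta)$ with $[\![\theta]\!]\neq\emptyset$. Transductions $\mathrm{Tr}(T)=\{(\bar\sigma,\hat\sigma,[\![\theta]\!])\mid(\bar\sigma,\hat\sigma)\in L_{in}(T),\ (q,\theta)\in\widehat{\mathrm{run}}_T(\bar\sigma,\hat\sigma)\}$; accepting transductions $\mathrm{Tr}_{acc}(T)$: same with additionally $q\in F$. Two transducers are equivalent ($T_1\equiv T_2$) iff $\mathrm{Tr}(T_1)=\mathrm{Tr}(T_2)$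 and $\mathrm{Tr}_{acc}(T_1)=\mathrm{Tr}_{acc}(T_2)$. *)

theory Defs
  imports Main
begin

section \<open>Finite and infinite words  A^\<infinity> = A^* \<union> A^\<omega>\<close>

datatype 'a xword = Fin (fin_list: "'a list") | Inf "nat \<Rightarrow> 'a"

fun xconc :: "'a xword \<Rightarrow> 'a xword \<Rightarrow> 'a xword" where
  "xconc (Fin x) (Fin y) = Fin (x @ y)"
| "xconc (Fin x) (Inf f) = Inf (\<lambda>n. if n < length x then x ! n else f (n - length x))"
| "xconc (Inf f) _ = Inf f"

definition setconc :: "'a xword set \<Rightarrow> 'a xword set \<Rightarrow> 'a xword set" where
  "setconc A B = {xconc x y | x y. x \<in> A \<and> y \<in> B}"

fun xprefs :: "(nat \<Rightarrow> 'a xword) \<Rightarrow> nat \<Rightarrow> 'a xword" where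
  "xprefs xs 0 = Fin []"
| "xprefs xs (Suc n) = xconc (xprefs xs n) (xs n)"

definition xconc_inf :: "(nat \<Rightarrow> 'a xword) \<Rightarrow> 'a xword" where
  "xconc_inf xs =
     (if \<exists>n. \<forall>m\<ge>n. xprefs xs m = xprefs xs n
      then xprefs xs (LEAST n. \<forall>m\<ge>n. xprefs xs m = xprefs xs n)
      else Inf (\<lambda>k. fin_list (xprefs xs (LEAST n. k < length (fin_list (xprefs xs n)))) ! k))"

record ('a, 'w) wdom =
  den :: "'w \<Rightarrow> 'a xword set"
  abs :: "'a xword set \<Rightarrow> 'w"
  weps :: 'w

text \<open>Abstract word domain over A (denotations in 2^(A^\<infinity>)); the lattice is the
  complete lattice structure of the type 'w.\<close>
definition wdom_ok :: "('a, 'w::complete_lattice) wdom \<Rightarrow> bool" where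
  "wdom_ok D \<longleftrightarrow>
     (\<forall>S. den D (abs D S) = S) \<and> den D (weps D) = {Fin []} \<and> den D bot = {}"

definition input_wdom_ok :: "('a, 'w::complete_lattice) wdom \<Rightarrow> bool" where
  "input_wdom_ok D \<longleftrightarrow>
     (\<forall>w. den D w \<subseteq> range Fin) \<and>
     (\<forall>S. S \<subseteq> range Fin \<longrightarrow> den D (abs D S) = S) \<and>
     den D (weps D) = {Fin []} \<and> den D bot = {} \<and>
     (\<forall>x y z::'w. inf x (sup y z) = sup (inf x y) (inf x z)) \<and>
     (\<forall>x::'w. \<exists>y. inf x y = bot \<and> sup x y = top)"

definition aconc :: "('a, 'w) wdom \<Rightarrow> 'w \<Rightarrow> 'w \<Rightarrow> 'w" where
  "aconc D u v = abs D (setconc (den D u) (den D v))"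

definition aquot :: "('a, 'w) wdom \<Rightarrow> 'w \<Rightarrow> 'w \<Rightarrow> 'w" where
  "aquot D u v = abs D {s. \<exists>p \<in> den D v. xconc p s \<in> den D u}"

definition ahead :: "('a, 'w) wdom \<Rightarrow> 'w \<Rightarrow> 'w" where
  "ahead D u = abs D {h. (\<exists>c. h = Fin [c]) \<and> (\<exists>x. xconc h x \<in> den D u)}"

definition atail :: "('a, 'w) wdom \<Rightarrow> 'w \<Rightarrow> 'w" where
  "atail D u = abs D {x. \<exists>c. xconc (Fin [c]) x \<in> den D u}"

text \<open>Control states: user states, plus the implicit trap and bottom states.\<close>
datatype 'q st = St 'q | Trap | Bot

record ('q, 'wi, 'wo) transducer =
  states :: "'q set"
  init :: "('q st \<times> 'wo) set"
  final :: "'q st set"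
  trans :: "('q st \<times> 'wi \<times> 'q st \<times> 'wo) set"

definition Qs :: "('q, 'wi, 'wo) transducer \<Rightarrow> 'q st set" where
  "Qs T = St ` states T \<union> {Trap, Bot}"

definition functional_set :: "('q \<times> 'w) set \<Rightarrow> bool" where
  "functional_set M \<longleftrightarrow> (\<forall>q x y. (q, x) \<in> M \<and> (q, y) \<in> M \<longrightarrow> x = y)"

definition at_most_one :: "'x set \<Rightarrow> bool" where
  "at_most_one S \<longleftrightarrow> (\<forall>x\<in>S. \<forall>y\<in>S. x = y)"

definition transducer_ok ::
  "('a, 'wi::complete_lattice) wdom \<Rightarrow> ('b, 'wo::complete_lattice) wdom \<Rightarrow> ('q, 'wi, 'wo) transducer \<Rightarrow> bool" where
  "transducer_ok DI DO T \<longleftrightarrow>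
     finite (states T) \<and>
     init T \<noteq> {} \<and> finite (init T) \<and> fst ` init T \<subseteq> Qs T \<and> functional_set (init T) \<and>
     final T \<subseteq> Qs T \<and> Bot \<notin> final T \<and>
     (\<forall>(p, w, p', \<theta>) \<in> trans T. p \<in> Qs T \<and> p' \<in> Qs T \<and> p \<noteq> Trap \<and> p \<noteq> Bot \<and> w \<noteq> bot)"

definition delta :: "('b, 'wo::complete_lattice) wdom \<Rightarrow> ('q, 'wi::complete_lattice, 'wo) transducer
    \<Rightarrow> ('q st \<times> 'wi \<times> 'q st \<times> 'wo) set" where
  "delta DO T = trans T \<union> {(Trap, top, Trap, weps DO)}"

definition eps_moves :: "('a, 'wi::complete_lattice) wdom \<Rightarrow> ('b, 'wo::complete_lattice) wdom
    \<Rightarrow> ('q, 'wi, 'wo) transducer \<Rightarrow> ('q st \<times> 'q st) set" where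
  "eps_moves DI DO T = {(p, p'). \<exists>w \<theta>. (p, w, p', \<theta>) \<in> delta DO T \<and> den DI w = {Fin []}}"

definition eclos :: "('a, 'wi::complete_lattice) wdom \<Rightarrow> ('b, 'wo::complete_lattice) wdom
    \<Rightarrow> ('q, 'wi, 'wo) transducer \<Rightarrow> 'q st \<Rightarrow> 'q st set" where
  "eclos DI DO T q =
     (let E = eps_moves DI DO T in
      E\<^sup>* `` {q} \<union>
      (if \<exists>p \<in> E\<^sup>* `` {q}. (p, p) \<in> E\<^sup>+ \<and> (\<forall>p' \<in> E\<^sup>* `` {p}. \<exists>p''. (p', p'') \<in> E)
       then {Bot} else {}))"

definition CT :: "('a, 'wi::complete_lattice) wdom \<Rightarrow> ('b, 'wo::complete_lattice) wdom
    \<Rightarrow> ('q, 'wi, 'wo) transducer \<Rightarrow> 'q st \<Rightarrow> 'q st set" where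
  "CT DI DO T q =
     {q' \<in> eclos DI DO T q. \<not> (\<exists>p''. (q', p'') \<in> eps_moves DI DO T)} \<union> (eclos DI DO T q \<inter> final T)"

inductive epsfin :: "('a, 'wi::complete_lattice) wdom \<Rightarrow> ('b, 'wo::complete_lattice) wdom
    \<Rightarrow> ('q, 'wi, 'wo) transducer \<Rightarrow> 'q st \<Rightarrow> 'q st \<Rightarrow> 'b xword \<Rightarrow> bool"
  for DI DO T where
  nil: "epsfin DI DO T q q (Fin [])"
| step: "(q, w, q', \<theta>) \<in> delta DO T \<Longrightarrow> den DI w = {Fin []} \<Longrightarrow> y \<in> den DO \<theta> \<Longrightarrow>
         epsfin DI DO T q' qt z \<Longrightarrow> epsfin DI DO T q qt (xconc y z)"

definition epsinf :: "('a, 'wi::complete_lattice) wdom \<Rightarrow> ('b, 'wo::complete_lattice) wdom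
    \<Rightarrow> ('q, 'wi, 'wo) transducer \<Rightarrow> 'q st \<Rightarrow> 'b xword set" where
  "epsinf DI DO T q =
     {xconc_inf ys | ps ws ths ys.
        ps 0 = q \<and>
        (\<forall>i. (ps i, ws i, ps (Suc i), ths i) \<in> delta DO T \<and> den DI (ws i) = {Fin []} \<and>
             ys i \<in> den DO (ths i))}"

definition Lambda :: "('a, 'wi::complete_lattice) wdom \<Rightarrow> ('b, 'wo::complete_lattice) wdom
    \<Rightarrow> ('q, 'wi, 'wo) transducer \<Rightarrow> 'q st \<Rightarrow> 'q st \<Rightarrow> 'b xword set" where
  "Lambda DI DO T q qt = (if qt = Bot then epsinf DI DO T q else {z. epsfin DI DO T q qt z})"

definition Cl :: "('a, 'wi::complete_lattice) wdom \<Rightarrow> ('b, 'wo::complete_lattice) wdom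
    \<Rightarrow> ('q, 'wi, 'wo) transducer \<Rightarrow> 'q st \<Rightarrow> 'wo \<Rightarrow> ('q st \<times> 'wo) set" where
  "Cl DI DO T q \<theta>0 =
     {(qt, abs DO (setconc (den DO \<theta>0) (Lambda DI DO T q qt))) | qt. qt \<in> CT DI DO T q}"

definition ijoin :: "('q \<times> 'w::complete_lattice) set \<Rightarrow> ('q \<times> 'w) set" where
  "ijoin M = {(q, Sup {\<theta>. (q, \<theta>) \<in> M}) | q. q \<in> fst ` M}"

text \<open>The run, with the recursion unfolded n times.\<close>
fun runN :: "('a, 'wi::complete_lattice) wdom \<Rightarrow> ('b, 'wo::complete_lattice) wdom
    \<Rightarrow> ('q, 'wi, 'wo) transducer \<Rightarrow> nat \<Rightarrow> 'q st \<Rightarrow> 'wo \<Rightarrow> 'wi \<Rightarrow> 'wi \<Rightarrow> ('q st \<times> 'wo) set" where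
  "runN DI DO T 0 q \<theta> w wl = (if w = weps DI then {(q, \<theta>)} else {})"
| "runN DI DO T (Suc n) q \<theta> w wl =
     (if w = weps DI then {(q, \<theta>)}
      else ijoin (\<Union> {runN DI DO T n q'' (aconc DO \<theta> \<theta>'') (atail DI w) wl
                     | q'' \<theta>'' wt q' \<theta>'.
                       (q, wt, q', \<theta>') \<in> delta DO T \<and> (q'', \<theta>'') \<in> Cl DI DO T q' \<theta>' \<and>
                       aquot DI (aconc DI w wl) wt \<noteq> bot \<and>
                       aquot DI (ahead DI w) (ahead DI wt) \<noteq> bot}))"

definition run :: "('a, 'wi::complete_lattice) wdom \<Rightarrow> ('b, 'wo::complete_lattice) wdom
    \<Rightarrow> ('q, 'wi, 'wo) transducer \<Rightarrow> 'q st \<Rightarrow> 'wo \<Rightarrow> 'wi \<Rightarrow> 'wi \<Rightarrow> ('q st \<times> 'wo) set" where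
  "run DI DO T q \<theta> w wl =
     (if \<exists>n. (atail DI ^^ n) w = weps DI
      then runN DI DO T (LEAST n. (atail DI ^^ n) w = weps DI) q \<theta> w wl
      else {})"

definition runhat :: "('a, 'wi::complete_lattice) wdom \<Rightarrow> ('b, 'wo::complete_lattice) wdom
    \<Rightarrow> ('q, 'wi, 'wo) transducer \<Rightarrow> ('q st \<times> 'wo) set \<Rightarrow> 'wi \<Rightarrow> 'wi \<Rightarrow> ('q st \<times> 'wo) set" where
  "runhat DI DO T \<iota> w wl = ijoin (\<Union>(q, \<theta>) \<in> \<iota>. run DI DO T q \<theta> w wl)"

definition runT :: "('a, 'wi::complete_lattice) wdom \<Rightarrow> ('b, 'wo::complete_lattice) wdom
    \<Rightarrow> ('q, 'wi, 'wo) transducer \<Rightarrow> 'a list \<Rightarrow> 'a list set \<Rightarrow> ('q st \<times> 'wo) set" where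
  "runT DI DO T s sh = runhat DI DO T (init T) (abs DI {Fin s}) (abs DI (Fin ` sh))"

definition deterministic :: "('a, 'wi::complete_lattice) wdom \<Rightarrow> ('b, 'wo::complete_lattice) wdom
    \<Rightarrow> ('q, 'wi, 'wo) transducer \<Rightarrow> bool" where
  "deterministic DI DO T \<longleftrightarrow>
     at_most_one (init T) \<and> (\<forall>s sh. at_most_one (runT DI DO T s sh))"

definition Lin :: "('a, 'wi::complete_lattice) wdom \<Rightarrow> ('b, 'wo::complete_lattice) wdom
    \<Rightarrow> ('q, 'wi, 'wo) transducer \<Rightarrow> ('a list \<times> 'a list set) set" where
  "Lin DI DO T = {(s, sh). \<exists>(q, \<theta>) \<in> runT DI DO T s sh. den DO \<theta> \<noteq> {}}"

definition Tr :: "('a, 'wi::complete_lattice) wdom \<Rightarrow> ('b, 'wo::complete_lattice) wdom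
    \<Rightarrow> ('q, 'wi, 'wo) transducer \<Rightarrow> ('a list \<times> 'a list set \<times> 'b xword set) set" where
  "Tr DI DO T = {(s, sh, den DO \<theta>) | s sh q \<theta>. (s, sh) \<in> Lin DI DO T \<and> (q, \<theta>) \<in> runT DI DO T s sh}"

definition Tr_acc :: "('a, 'wi::complete_lattice) wdom \<Rightarrow> ('b, 'wo::complete_lattice) wdom
    \<Rightarrow> ('q, 'wi, 'wo) transducer \<Rightarrow> ('a list \<times> 'a list set \<times> 'b xword set) set" where
  "Tr_acc DI DO T = {(s, sh, den DO \<theta>) | s sh q \<theta>.
      (s, sh) \<in> Lin DI DO T \<and> (q, \<theta>) \<in> runT DI DO T s sh \<and> q \<in> final T}"

definition tequiv :: "('a, 'wi::complete_lattice) wdom \<Rightarrow> ('b, 'wo::complete_lattice) wdom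
    \<Rightarrow> ('q1, 'wi, 'wo) transducer \<Rightarrow> ('q2, 'wi, 'wo) transducer \<Rightarrow> bool" where
  "tequiv DI DO T1 T2 \<longleftrightarrow> Tr DI DO T1 = Tr DI DO T2 \<and> Tr_acc DI DO T1 = Tr_acc DI DO T2"

end

theory Submission
  imports Defs
begin

text \<open>A deterministic transducer has at most one pair in the run on any input, so its
  transductions are functional in the input. Already on the empty input this fails for a
  transducer with two initial states carrying the outputs \<open>\<epsilon>\<close> and \<open>b\<close>, since its
  run on \<open>\<epsilon>\<close> just returns the initial transducer state.\<close>

lemma ijoin_functional:
  assumes "functional_set M"
  shows "ijoin M = M"
proof -
  have "Sup {\<theta>'. (q, \<theta>') \<in> M} = \<theta>" if "(q, \<theta>) \<in> M" for q \<theta>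
  proof -
    have "{\<theta>'. (q, \<theta>') \<in> M} = {\<theta>}"
      using that assms unfolding functional_set_def by blast
    then show ?thesis by simp
  qed
  then show ?thesis
    unfolding ijoin_def by force
qed

lemma run_weps: "run DI DO T q \<theta> (weps DI) wl = {(q, \<theta>)}"
proof -
  have terminates: "(atail DI ^^ 0) (weps DI) = weps DI" by simp
  then have "(LEAST n. (atail DI ^^ n) (weps DI) = weps DI) = 0"
    by (rule Least_eq_0)
  with terminates show ?thesis
    unfolding run_def by (auto intro: exI[of _ 0])
qed

lemma runT_Nil:
  assumes "abs DI {Fin []} = weps DI" and "functional_set (init T)"
  shows "runT DI DO T [] sh = init T"
proof -
  have "(\<Union>(q, \<theta>) \<in> init T. run DI DO T q \<theta> (weps DI) wl) = init T" for wl
    by (auto simp: run_weps)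
  then show ?thesis
    unfolding runT_def runhat_def assms(1) using ijoin_functional[OF assms(2)] by simp
qed

lemma Tr_Nil_init:
  assumes "abs DI {Fin []} = weps DI" and "functional_set (init T)"
    and "(q, \<theta>) \<in> init T" and "den DO \<theta> \<noteq> {}"
  shows "([], sh, den DO \<theta>) \<in> Tr DI DO T"
proof -
  have "(q, \<theta>) \<in> runT DI DO T [] sh"
    using assms(3) by (simp add: runT_Nil[OF assms(1,2)])
  moreover from this have "([], sh) \<in> Lin DI DO T"
    unfolding Lin_def using assms(4) by blast
  ultimately show ?thesis
    unfolding Tr_def by blast
qed

lemma deterministic_Tr_functional:
  assumes "deterministic DI DO T"
    and "(s, sh, X) \<in> Tr DI DO T" and "(s, sh, Y) \<in> Tr DI DO T"
  shows "X = Y"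
proof -
  obtain q \<theta> where q: "(q, \<theta>) \<in> runT DI DO T s sh" "X = den DO \<theta>"
    using assms(2) unfolding Tr_def by blast
  obtain q' \<theta>' where q': "(q', \<theta>') \<in> runT DI DO T s sh" "Y = den DO \<theta>'"
    using assms(3) unfolding Tr_def by blast
  have "at_most_one (runT DI DO T s sh)"
    using assms(1) unfolding deterministic_def by blast
  then have "(q, \<theta>) = (q', \<theta>')"
    using q(1) q'(1) unfolding at_most_one_def by blast
  with q(2) q'(2) show ?thesis by simp
qed

definition powerset_input_wdom :: "('a, 'a xword set) wdom" where
  "powerset_input_wdom = \<lparr>den = (\<lambda>S. S \<inter> range Fin), abs = id, weps = {Fin []}\<rparr>"

definition powerset_wdom :: "('b, 'b xword set) wdom" where
  "powerset_wdom = \<lparr>den = id, abs = id, weps = {Fin []}\<rparr>"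

lemma input_wdom_ok_powerset_input_wdom: "input_wdom_ok powerset_input_wdom"
  unfolding input_wdom_ok_def powerset_input_wdom_def by (auto simp: Int_Un_distrib)

lemma wdom_ok_powerset_wdom: "wdom_ok powerset_wdom"
  unfolding wdom_ok_def powerset_wdom_def by simp

definition fork_transducer :: "'b \<Rightarrow> (nat, 'wi, 'b xword set) transducer" where
  "fork_transducer b =
     \<lparr>states = {0, 1}, init = {(St 0, {Fin []}), (St 1, {Fin [b]})}, final = {}, trans = {}\<rparr>"

lemma functional_set_init_fork_transducer: "functional_set (init (fork_transducer b))"
  unfolding functional_set_def fork_transducer_def by auto

lemma transducer_ok_fork_transducer:
  "transducer_ok DI DO (fork_transducer b)"
  using functional_set_init_fork_transducer[of b]
  unfolding transducer_ok_def by (simp add: fork_transducer_def Qs_def)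

theorem mainTheorem2:
  shows "\<exists>(DI :: ('a, 'a xword set) wdom) (DO :: ('b, 'b xword set) wdom)
            (T :: (nat, 'a xword set, 'b xword set) transducer).
           input_wdom_ok DI \<and> wdom_ok DO \<and> transducer_ok DI DO T \<and>
           \<not> (\<exists>Td :: ('q, 'a xword set, 'b xword set) transducer.
                 transducer_ok DI DO Td \<and> deterministic DI DO Td \<and> tequiv DI DO T Td)"
proof (intro exI conjI)
  let ?DI = "powerset_input_wdom :: ('a, 'a xword set) wdom"
  let ?DO = "powerset_wdom :: ('b, 'b xword set) wdom"
  let ?T = "fork_transducer undefined :: (nat, 'a xword set, 'b xword set) transducer"
  show "input_wdom_ok ?DI" "wdom_ok ?DO" "transducer_ok ?DI ?DO ?T"
    by (rule input_wdom_ok_powerset_input_wdom wdom_ok_powerset_wdom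
        transducer_ok_fork_transducer)+
  have "([], {}, \<theta>) \<in> Tr ?DI ?DO ?T" if "(q, \<theta>) \<in> init ?T" and "\<theta> \<noteq> {}" for q \<theta>
    using Tr_Nil_init[where DI = ?DI and DO = ?DO,
        OF _ functional_set_init_fork_transducer that(1)] that(2)
    by (simp add: powerset_input_wdom_def powerset_wdom_def)
  then have outputs:
    "([], {}, {Fin []}) \<in> Tr ?DI ?DO ?T" "([], {}, {Fin [undefined]}) \<in> Tr ?DI ?DO ?T"
    by (simp_all add: fork_transducer_def)
  show "\<not> (\<exists>Td :: ('q, 'a xword set, 'b xword set) transducer.
           transducer_ok ?DI ?DO Td \<and> deterministic ?DI ?DO Td \<and> tequiv ?DI ?DO ?T Td)"
  proof
    assume "\<exists>Td :: ('q, 'a xword set, 'b xword set) transducer.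
              transducer_ok ?DI ?DO Td \<and> deterministic ?DI ?DO Td \<and> tequiv ?DI ?DO ?T Td"
    then obtain Td :: "('q, 'a xword set, 'b xword set) transducer"
      where det: "deterministic ?DI ?DO Td" and same_Tr: "Tr ?DI ?DO ?T = Tr ?DI ?DO Td"
      unfolding tequiv_def by blast
    have "{Fin []} = {Fin [undefined :: 'b]}"
      by (rule deterministic_Tr_functional[OF det]) (use outputs same_Tr in simp_all)
    then show False by simp
  qed
qed

end
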